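(* Introduce on $\mathbb R^2$ the coordinates $(\rho,\varphi)$ with $\varphi=2\pi t/T\in S^1$, $T=4\pi/f'(r_0)$, and $\rho\ge0$ defined by $\rho^2=4f(r)/f'(r_0)^2$, so that $\mathring g=\rho^2d\varphi^2+\frac{f'(r_0)^2}{f'(r(\rho))^2}d\rho^2+r(\rho)^2h_K$. Consider the one-parameter family $\mu\mapsto\mathring g_\mu$ of such metrics, written in the fixed coordinates $(\rho,\varphi,x)$ ($x\in N$), and the symmetric tensor $\frac{d\mathring g_\mu}{d\mu}$. Then $\frac{d\mathring g_\mu}{d\mu}\in L^2(M,\mathring g_\mu)$ if and only if $\frac{d}{d\mu}\big(f'(r_0)\big)=0$. This happens if and only if $K=1$ and $\mu=\mu_c:=\frac{n}{n+1}\big(\ell\sqrt{\tfrac{n-1}{n+1}}\big)^{n-1}$ (equivalently $r_0=\ell\sqrt{\frac{n-1}{n+1}}$); for $K\in\{0,-1\}$ the variation is never in $L^2$.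
   Context: Fix an integer $n\ge2$, constants $\ell>0$, $K\in\{-1,0,1\}$, $\mu\in\mathbb R$. Let $(N,h_K)$ be a closed $n$-dimensional Riemannian manifold of constant sectional curvature $K$. Set $f(r)=\frac{r^2}{\ell^2}+K-\frac{2\mu}{r^{n-1}}$. Assume $\mu>0$ if $K\in\{0,1\}$ and $\mu>\mu_{\min}:=-\frac{1}{n+1}\big(\frac{n+1}{\ell^2(n-1)}\big)^{\frac{1-n}{2}}$ if $K=-1$; then $f$ has a largest positive zero $r_0$ (depending on $\mu$), which is simple, and $f>0$, $f'>0$ on $(r_0,\infty)$. The Riemannian Kottler metric is $\mathring g=f(r)\,dt^2+f(r)^{-1}dr^2+r^2h_K$ on $M=\mathbb R^2\times N$, $r\in[r_0,\infty)$, $t$ periodic with period $4\pi/f'(r_0)$, $(r,t)$ polar-type coordinates on $\mathbb R^2$ centred at $r=r_0$. *)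

theory Defs
  imports "HOL-Analysis.Analysis"
begin

definition kf :: "nat \<Rightarrow> real \<Rightarrow> int \<Rightarrow> real \<Rightarrow> real \<Rightarrow> real" where
  "kf n l K mu r = r^2 / l^2 + real_of_int K - 2 * mu / r^(n-1)"

definition mu_min :: "nat \<Rightarrow> real \<Rightarrow> real" where
  "mu_min n l = - (1 / (real n + 1)) * ((real n + 1) / (l^2 * (real n - 1))) powr ((1 - real n) / 2)"

definition mu_crit :: "nat \<Rightarrow> real \<Rightarrow> real" where
  "mu_crit n l = (real n / (real n + 1)) * (l * sqrt ((real n - 1) / (real n + 1))) ^ (n - 1)"

definition admissible :: "nat \<Rightarrow> real \<Rightarrow> int \<Rightarrow> real \<Rightarrow> bool" where
  "admissible n l K mu \<longleftrightarrow>
     (K \<in> {0, 1} \<longrightarrow> mu > 0) \<and> (K = -1 \<longrightarrow> mu > mu_min n l)"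

definition kr0 :: "nat \<Rightarrow> real \<Rightarrow> int \<Rightarrow> real \<Rightarrow> real" where
  "kr0 n l K mu = (GREATEST r. r > 0 \<and> kf n l K mu r = 0)"

definition fp0 :: "nat \<Rightarrow> real \<Rightarrow> int \<Rightarrow> real \<Rightarrow> real" where
  "fp0 n l K mu = deriv (kf n l K mu) (kr0 n l K mu)"

definition krho :: "nat \<Rightarrow> real \<Rightarrow> int \<Rightarrow> real \<Rightarrow> real \<Rightarrow> real" where
  "krho n l K mu r = 2 * sqrt (kf n l K mu r) / fp0 n l K mu"

definition kr_of_rho :: "nat \<Rightarrow> real \<Rightarrow> int \<Rightarrow> real \<Rightarrow> real \<Rightarrow> real" where
  "kr_of_rho n l K mu rho = (THE r. r \<ge> kr0 n l K mu \<and> krho n l K mu r = rho)"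

text \<open>Metric in the fixed coordinates (rho, phi, x):
  g = rho^2 dphi^2 + A(rho) drho^2 + B(rho) h_K with
  A = f'(r0)^2 / f'(r(rho))^2 and B = r(rho)^2.\<close>
definition gA :: "nat \<Rightarrow> real \<Rightarrow> int \<Rightarrow> real \<Rightarrow> real \<Rightarrow> real" where
  "gA n l K mu rho = (fp0 n l K mu)^2 / (deriv (kf n l K mu) (kr_of_rho n l K mu rho))^2"

definition gB :: "nat \<Rightarrow> real \<Rightarrow> int \<Rightarrow> real \<Rightarrow> real \<Rightarrow> real" where
  "gB n l K mu rho = (kr_of_rho n l K mu rho)^2"

text \<open>The variation h = d g_mu / d mu (at fixed coordinates) has components
  h_phiphi = 0, h_rhorho = dA/dmu, h_N = (dB/dmu) h_K.
  Its pointwise squared norm w.r.t. g_mu is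
  |h|^2 = (h_rhorho / A)^2 + n (dB/dmu / B)^2,
  and the Riemannian volume density is rho sqrt(A) B^(n/2) drho dphi dvol_{h_K}.\<close>
definition var_norm_sq :: "nat \<Rightarrow> real \<Rightarrow> int \<Rightarrow> real \<Rightarrow> real \<Rightarrow> real" where
  "var_norm_sq n l K mu rho =
     (deriv (\<lambda>m. gA n l K m rho) mu / gA n l K mu rho)^2
     + real n * (deriv (\<lambda>m. gB n l K m rho) mu / gB n l K mu rho)^2"

definition vol_density :: "nat \<Rightarrow> real \<Rightarrow> int \<Rightarrow> real \<Rightarrow> real \<Rightarrow> real" where
  "vol_density n l K mu rho = rho * sqrt (gA n l K mu rho) * (kr_of_rho n l K mu rho) ^ n"

text \<open>d g_mu/d mu \<in> L^2(M, g_mu). After integrating out phi \<in> S^1 (factor 2 pi) and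
  x \<in> N (factor vol(N,h_K), finite and positive as N is closed), this is integrability of
  the nonnegative radial function |h|^2 * density over rho \<in> (0, \<infinity>).\<close>
definition variation_L2 :: "nat \<Rightarrow> real \<Rightarrow> int \<Rightarrow> real \<Rightarrow> bool" where
  "variation_L2 n l K mu \<longleftrightarrow>
     (\<lambda>rho. var_norm_sq n l K mu rho * vol_density n l K mu rho) integrable_on {0<..}"

end

theory Submission
  imports Defs
begin

text \<open>
  Setting \<open>f(r) = 0\<close> gives \<open>mu = m(r) := r^(n-1) (r^2/l^2 + K) / 2\<close>, and m is strictly
  increasing beyond its extremal radius, so the horizon radius r0 is the inverse function of m
  there. At a root, \<open>f'(r0) = kappa(r0) := (n+1) r0/l^2 + (n-1) K/r0\<close>, hence
  \<open>d f'(r0)/d mu = kappa'(r0) / m'(r0)\<close>, which vanishes exactly when \<open>K = 1\<close> and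
  \<open>r0 = l sqrt((n-1)/(n+1))\<close>.

  For the \<open>L^2\<close> statement the radius \<open>r(mu, rho)\<close> is differentiated implicitly in
  \<open>f_mu(r) = rho^2 f'(r0)^2 / 4\<close>. For large r its mu-derivative behaves like
  \<open>r (d f'(r0)/d mu) / f'(r0)\<close>; if this coefficient is nonzero, the density of
  \<open>|d g/d mu|^2\<close> with respect to \<open>d rho\<close> stays bounded away from zero as \<open>rho \<rightarrow> \<infinity>\<close>.
  If it vanishes, every remaining term decays and the density is \<open>O(r^-4) = O(rho^-4)\<close>,
  so it is integrable.
\<close>

section \<open>Inverse and implicit functions; integrability on half-lines\<close>

lemma isCont_inverse_function_Ioi:
  fixes f g :: "real \<Rightarrow> real"
  assumes "x > a" and inv: "\<And>z. z > a \<Longrightarrow> g (f z) = z" and cont: "\<And>z. z > a \<Longrightarrow> isCont f z"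
  shows "isCont g (f x)"
proof -
  have near: "z > a" if "\<bar>z - x\<bar> \<le> (x - a) / 2" for z
    using \<open>x > a\<close> abs_le_D2[OF that] by (simp add: field_simps)
  show ?thesis
  proof (rule isCont_inverse_function[where f = f and g = g and x = x and d = "(x - a) / 2"])
    show "(x - a) / 2 > 0" using \<open>x > a\<close> by simp
  qed (use near inv cont in blast)+
qed

lemma implicit_function_has_real_derivative:
  fixes F :: "real \<times> real \<Rightarrow> real" and r :: "real \<Rightarrow> real"
  assumes "open S" and "continuous_on S F"
    and slice_inj: "\<And>m y z. (m, y) \<in> S \<Longrightarrow> (m, z) \<in> S \<Longrightarrow> F (m, y) = F (m, z) \<Longrightarrow> y = z"
    and "open U" and "m0 \<in> U" and graph: "\<And>m. m \<in> U \<Longrightarrow> (m, r m) \<in> S \<and> F (m, r m) = 0"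
    and F_deriv: "(F has_derivative (\<lambda>h. a * fst h + b * snd h)) (at (m0, r m0))" and "b \<noteq> 0"
  shows "(r has_real_derivative - a / b) (at m0)"
proof -
  define \<Phi> where "\<Phi> x = (fst x, F x)" for x
  define \<Psi> where "\<Psi> y = (fst y, THE z. (fst y, z) \<in> S \<and> F (fst y, z) = snd y)" for y
  have \<Psi>_\<Phi>: "\<Psi> (\<Phi> x) = x" if "x \<in> S" for x
  proof -
    have "(THE z. (fst x, z) \<in> S \<and> F (fst x, z) = F x) = snd x"
      using that slice_inj[of "fst x" "snd x"] by (intro the_equality) auto
    then show ?thesis by (simp add: \<Phi>_def \<Psi>_def)
  qed
  have in_S: "(m0, r m0) \<in> S" using graph[OF \<open>m0 \<in> U\<close>] by simp
  have \<Phi>_deriv: "(\<Phi> has_derivative (\<lambda>h. (fst h, a * fst h + b * snd h))) (at (m0, r m0))"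
    unfolding \<Phi>_def by (intro has_derivative_Pair has_derivative_fst has_derivative_ident F_deriv)
  have \<Phi>_cont: "continuous_on S \<Phi>"
    unfolding \<Phi>_def by (intro continuous_intros \<open>continuous_on S F\<close>)
  have inverse_linear: "(\<lambda>h. (fst h, a * fst h + b * snd h)) \<circ> (\<lambda>k. (fst k, (snd k - a * fst k) / b)) = id"
    using \<open>b \<noteq> 0\<close> by (auto simp: fun_eq_iff)
  have "\<Phi> (m0, r m0) = (m0, 0)" using graph[OF \<open>m0 \<in> U\<close>] by (simp add: \<Phi>_def)
  with has_derivative_inverse_strong[OF \<open>open S\<close> in_S \<Phi>_cont \<Psi>_\<Phi> \<Phi>_deriv inverse_linear]
  have \<Psi>_deriv: "(\<Psi> has_derivative (\<lambda>k. (fst k, (snd k - a * fst k) / b))) (at (m0, 0))"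
    by simp
  have "((\<lambda>m. (m, 0)) has_derivative (\<lambda>h. (h, 0))) (at m0)"
    by (intro has_derivative_Pair has_derivative_ident has_derivative_const)
  from has_derivative_snd[OF has_derivative_compose[OF this \<Psi>_deriv]]
  have "((\<lambda>m. snd (\<Psi> (m, 0))) has_derivative (*) (- a / b)) (at m0)"
    by (rule has_derivative_eq_rhs) (simp add: fun_eq_iff)
  then have "((\<lambda>m. snd (\<Psi> (m, 0))) has_real_derivative - a / b) (at m0)"
    by (simp only: has_field_derivative_def)
  then show ?thesis
  proof (rule has_field_derivative_transform_within_open[OF _ \<open>open U\<close> \<open>m0 \<in> U\<close>])
    fix m assume "m \<in> U"
    then show "snd (\<Psi> (m, 0)) = r m"
      using \<Psi>_\<Phi>[of "(m, r m)"] graph[of m] by (simp add: \<Phi>_def)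
  qed
qed

lemma not_integrable_on_Ioi_if_eventually_ge:
  fixes F :: "real \<Rightarrow> real"
  assumes nonneg: "\<And>x. x > a \<Longrightarrow> F x \<ge> 0" and "e > 0"
    and "eventually (\<lambda>x. F x \<ge> e) at_top"
  shows "\<not> F integrable_on {a<..}"
proof
  assume int: "F integrable_on {a<..}"
  obtain b where b: "\<And>x. x \<ge> b \<Longrightarrow> F x \<ge> e"
    using \<open>eventually _ at_top\<close> by (auto simp: eventually_at_top_linorder)
  define c where "c = max b (a + 1)"
  define T where "T = (\<bar>integral {a<..} F\<bar> + 1) / e"
  have "T > 0" using \<open>e > 0\<close> by (simp add: T_def)
  have sub: "{c..c + T} \<subseteq> {a<..}" by (auto simp: c_def)
  have int_cT: "F integrable_on {c..c + T}" by (rule integrable_on_subinterval[OF int sub])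
  have "\<bar>integral {a<..} F\<bar> + 1 = integral {c..c + T} (\<lambda>x. e)"
    using \<open>T > 0\<close> \<open>e > 0\<close> by (simp add: T_def)
  also have "\<dots> \<le> integral {c..c + T} F"
    using int_cT b by (intro integral_le) (auto simp: c_def)
  also have "\<dots> \<le> integral {a<..} F"
    using nonneg by (intro integral_subset_le[OF sub int_cT int]) auto
  finally show False by linarith
qed

lemma integrable_on_Ioi_0_if_bounded_and_power_decay:
  fixes F :: "real \<Rightarrow> real" and p :: nat
  assumes "continuous_on {0<..} F" and "p > 1"
    and near_0: "\<And>x. 0 < x \<Longrightarrow> x < 1 \<Longrightarrow> \<bar>F x\<bar> \<le> A"
    and decay: "\<And>x. 1 \<le> x \<Longrightarrow> \<bar>F x\<bar> \<le> B / x ^ p"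
  shows "F integrable_on {0<..}"
proof (rule measurable_bounded_by_integrable_imp_integrable_real)
  define G where "G x = (if x < 1 then A else B / x ^ p)" for x :: real
  have "(\<lambda>x. A) integrable_on {0<..<1::real}"
    using integrable_const_ivl[of A 0 "1::real"] integrable_on_open_interval[of "\<lambda>x. A" 0 "1::real"]
    by (simp add: box_real)
  then have "G integrable_on {0<..<1}" by (rule integrable_eq) (simp add: G_def)
  moreover have "(\<lambda>x::real. 1 / x ^ p) integrable_on {1..}"
    using has_integral_inverse_power_to_inf[OF \<open>p > 1\<close> zero_less_one] by (auto simp: integrable_on_def)
  from integrable_on_cmult_left[OF this, of B] have "G integrable_on {1..}" by (rule integrable_eq) (simp add: G_def)
  moreover have "{0<..<1} \<inter> {1..} = ({} :: real set)" by auto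
  ultimately have "G integrable_on {0<..<1} \<union> {1..}" by (intro integrable_Un) auto
  moreover have "{0<..<1} \<union> {1..} = {0::real<..}" by auto
  ultimately show "G integrable_on {0<..}" by simp
  show "\<bar>F x\<bar> \<le> G x" if "x \<in> {0<..}" for x
    using that near_0 decay by (simp add: G_def)
qed (use continuous_imp_measurable_on_sets_lebesgue[OF \<open>continuous_on {0<..} F\<close>] in auto)

section \<open>The horizon radius as a function of the mass\<close>

locale kottler =
  fixes n :: nat and l :: real and K :: int
  assumes n_ge_2: "n \<ge> 2" and l_pos: "l > 0" and K_cases: "K \<in> {-1, 0, 1}"
begin

lemma obtain_n_Suc_Suc:
  obtains k where "n = Suc (Suc k)"
  using n_ge_2 by (metis add_2_eq_Suc le_iff_add)

definition mass :: "real \<Rightarrow> real" where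
  "mass r = r ^ (n - 1) * (r\<^sup>2 / l\<^sup>2 + K) / 2"

definition kappa :: "real \<Rightarrow> real" where
  "kappa r = (real n + 1) * r / l\<^sup>2 + (real n - 1) * K / r"

definition r_crit :: real where
  "r_crit = l * sqrt ((real n - 1) / (real n + 1))"

definition r_extremal :: real where
  "r_extremal = (if K = -1 then r_crit else 0)"

abbreviation mu_extremal :: real where
  "mu_extremal \<equiv> mass r_extremal"

lemma r_crit_pos: "r_crit > 0"
  using n_ge_2 l_pos by (simp add: r_crit_def)

lemma r_crit_sq: "r_crit\<^sup>2 = l\<^sup>2 * (real n - 1) / (real n + 1)"
  using n_ge_2 by (simp add: r_crit_def power_mult_distrib)

lemma r_crit_sq_div_l_sq: "r_crit\<^sup>2 / l\<^sup>2 = (real n - 1) / (real n + 1)"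
  using l_pos by (simp add: r_crit_sq)

lemma r_extremal_nonneg: "r_extremal \<ge> 0"
  using r_crit_pos by (simp add: r_extremal_def)

lemma kappa_eq: "r > 0 \<Longrightarrow> kappa r = ((real n + 1) * r\<^sup>2 / l\<^sup>2 + (real n - 1) * K) / r"
  by (simp add: kappa_def field_simps power2_eq_square)

lemma kappa_pos:
  assumes "r > r_extremal"
  shows "kappa r > 0"
proof -
  have "r > 0" using assms r_extremal_nonneg by linarith
  have "(real n + 1) * r\<^sup>2 / l\<^sup>2 + (real n - 1) * K > 0"
  proof (cases "K = -1")
    case True
    then have "r_extremal = r_crit" unfolding r_extremal_def by simp
    then have "r_crit\<^sup>2 < r\<^sup>2"
      using assms r_crit_pos by (intro power_strict_mono) auto
    then have "real n - 1 < (real n + 1) * r\<^sup>2 / l\<^sup>2"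
      using l_pos by (simp add: r_crit_sq field_simps)
    then show ?thesis using True by simp
  next
    case False
    then have "K \<ge> 0" using K_cases by auto
    then show ?thesis using \<open>r > 0\<close> n_ge_2 l_pos by (simp add: add_pos_nonneg)
  qed
  then show ?thesis using \<open>r > 0\<close> by (simp add: kappa_eq)
qed

lemma mass_has_real_derivative:
  assumes "r > 0"
  shows "(mass has_real_derivative r ^ (n - 1) * kappa r / 2) (at r)"
proof -
  obtain k where n: "n = Suc (Suc k)" by (rule obtain_n_Suc_Suc)
  have "(mass has_real_derivative
      (real (n - 1) * r ^ (n - 2) * (r\<^sup>2 / l\<^sup>2 + K) + r ^ (n - 1) * (2 * r / l\<^sup>2)) / 2) (at r)"
    unfolding mass_def [abs_def] using l_pos
    by (auto intro!: derivative_eq_intros simp: numeral_2_eq_2 field_simps)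
  then show ?thesis
    by (rule DERIV_cong) (use assms l_pos in \<open>unfold kappa_def, simp add: n field_simps power2_eq_square\<close>)
qed

lemma continuous_on_mass: "continuous_on S mass"
  unfolding mass_def [abs_def] using l_pos by (intro continuous_intros) auto

lemma mass_strict_mono:
  assumes "r_extremal \<le> a" "a < b"
  shows "mass a < mass b"
proof (rule DERIV_pos_imp_increasing_open[OF \<open>a < b\<close> _ continuous_on_mass])
  fix r assume "a < r" "r < b"
  then have "r > r_extremal" "r > 0" using assms r_extremal_nonneg by linarith+
  then show "\<exists>y. (mass has_real_derivative y) (at r) \<and> 0 < y"
    using mass_has_real_derivative kappa_pos by (intro exI[of _ "r ^ (n - 1) * kappa r / 2"]) auto
qed

lemma mu_extremal_eq: "mu_extremal = (if K = -1 then mu_min n l else 0)"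
proof (cases "K = -1")
  case True
  have "(real n + 1) / (l\<^sup>2 * (real n - 1)) = r_crit powr (-2)"
    using r_crit_sq r_crit_pos n_ge_2 l_pos by (simp add: powr_minus powr_numeral field_simps)
  then have "((real n + 1) / (l\<^sup>2 * (real n - 1))) powr ((1 - real n) / 2)
      = r_crit powr (-2 * ((1 - real n) / 2))"
    by (simp add: powr_powr)
  also have "-2 * ((1 - real n) / 2) = real n - 1" by simp
  also have "r_crit powr (real n - 1) = r_crit ^ (n - 1)"
    using r_crit_pos n_ge_2 by (simp add: powr_realpow [symmetric] of_nat_diff)
  finally have mu_min_eq: "mu_min n l = - (r_crit ^ (n - 1)) / (real n + 1)"
    by (simp add: mu_min_def)
  have "r_crit\<^sup>2 / l\<^sup>2 - 1 = - 2 / (real n + 1)"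
    by (simp add: r_crit_sq_div_l_sq field_simps)
  moreover have "mu_extremal = r_crit ^ (n - 1) * (r_crit\<^sup>2 / l\<^sup>2 - 1) / 2"
    unfolding mass_def r_extremal_def using True by simp
  ultimately have "mu_extremal = r_crit ^ (n - 1) * (- 2 / (real n + 1)) / 2"
    by (simp only:)
  also have "\<dots> = mu_min n l"
    unfolding mu_min_eq by (simp add: field_simps)
  finally have "mu_extremal = mu_min n l" .
  then show ?thesis by (simp only: if_P[OF True])
qed (use n_ge_2 in \<open>simp add: mass_def r_extremal_def\<close>)

lemma admissible_iff: "admissible n l K mu \<longleftrightarrow> mu > mu_extremal"
  using K_cases by (auto simp: admissible_def mu_extremal_eq)

lemma ex_mass_eq:
  assumes "mu > mu_extremal"
  shows "\<exists>s > r_extremal. mass s = mu"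
proof -
  define b where "b = max (max 1 r_extremal) (l\<^sup>2 * (2 * \<bar>mu\<bar> + 2))"
  have "b \<ge> 1" "b \<ge> r_extremal" by (simp_all add: b_def)
  have "b\<^sup>2 / l\<^sup>2 \<ge> 2 * \<bar>mu\<bar> + 2"
  proof -
    have "b\<^sup>2 \<ge> b" using \<open>b \<ge> 1\<close> by (simp add: power2_eq_square)
    moreover have "b \<ge> l\<^sup>2 * (2 * \<bar>mu\<bar> + 2)" by (simp add: b_def)
    ultimately show ?thesis using l_pos by (simp add: field_simps)
  qed
  then have "b\<^sup>2 / l\<^sup>2 + K \<ge> 2 * \<bar>mu\<bar> + 1" using K_cases by auto
  moreover have "b ^ (n - 1) \<ge> 1" using \<open>b \<ge> 1\<close> by simp
  ultimately have "b ^ (n - 1) * (b\<^sup>2 / l\<^sup>2 + K) \<ge> 1 * (2 * \<bar>mu\<bar> + 1)"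
    by (intro mult_mono) auto
  then have "mass b \<ge> mu" by (simp add: mass_def)
  then obtain s where s: "r_extremal \<le> s" "s \<le> b" "mass s = mu"
    using IVT'[of mass r_extremal mu b] assms \<open>b \<ge> r_extremal\<close> continuous_on_mass by auto
  moreover have "s \<noteq> r_extremal" using s(3) assms by auto
  ultimately show ?thesis by (intro exI[of _ s]) auto
qed

lemma kf_eq_0_iff: "r > 0 \<Longrightarrow> kf n l K mu r = 0 \<longleftrightarrow> mass r = mu"
  using l_pos by (auto simp: kf_def mass_def field_simps)

lemma kr0_eqI:
  assumes "s > r_extremal" "mass s = mu"
  shows "kr0 n l K mu = s"
  unfolding kr0_def
proof (rule Greatest_equality)
  show "0 < s \<and> kf n l K mu s = 0"
    using assms r_extremal_nonneg kf_eq_0_iff by auto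
  fix r assume r: "0 < r \<and> kf n l K mu r = 0"
  show "r \<le> s"
  proof (rule ccontr)
    assume "\<not> r \<le> s"
    then have "mass s < mass r" using assms by (intro mass_strict_mono) auto
    then show False using r assms kf_eq_0_iff[of r mu] by simp
  qed
qed

lemma
  assumes "mu > mu_extremal"
  shows kr0_gt_r_extremal: "kr0 n l K mu > r_extremal"
    and mass_kr0: "mass (kr0 n l K mu) = mu"
    and kr0_pos: "kr0 n l K mu > 0"
proof -
  obtain s where "s > r_extremal" "mass s = mu" using ex_mass_eq[OF assms] by blast
  then show "kr0 n l K mu > r_extremal" "mass (kr0 n l K mu) = mu"
    using kr0_eqI by auto
  then show "kr0 n l K mu > 0" using r_extremal_nonneg by linarith
qed

definition kf' :: "real \<Rightarrow> real \<Rightarrow> real" where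
  "kf' mu r = 2 * r / l\<^sup>2 + 2 * (real n - 1) * mu / r ^ n"

lemma kf_has_real_derivative:
  assumes "r > 0"
  shows "(kf n l K mu has_real_derivative kf' mu r) (at r)"
proof -
  obtain k where n: "n = Suc (Suc k)" by (rule obtain_n_Suc_Suc)
  have "(kf n l K mu has_real_derivative
      2 * r / l\<^sup>2 + 2 * mu * (real (n - 1) * r ^ (n - 2)) / (r ^ (n - 1))\<^sup>2) (at r)"
    unfolding kf_def [abs_def] using assms l_pos
    by (auto intro!: derivative_eq_intros simp: numeral_2_eq_2 power2_eq_square)
  then show ?thesis
    by (rule DERIV_cong) (use assms l_pos in \<open>unfold kf'_def, simp add: n field_simps power2_eq_square\<close>)
qed

lemma deriv_kf: "r > 0 \<Longrightarrow> deriv (kf n l K mu) r = kf' mu r"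
  by (rule DERIV_imp_deriv[OF kf_has_real_derivative])

lemma kf'_eq_kappa: "r > 0 \<Longrightarrow> mass r = mu \<Longrightarrow> kf' mu r = kappa r"
proof -
  obtain k where n: "n = Suc (Suc k)" by (rule obtain_n_Suc_Suc)
  assume "r > 0" "mass r = mu"
  then have mu: "mu = r ^ (n - 1) * (r\<^sup>2 / l\<^sup>2 + K) / 2" by (simp add: mass_def)
  show "kf' mu r = kappa r"
    unfolding kf'_def kappa_def mu using \<open>r > 0\<close> l_pos by (simp add: n field_simps power2_eq_square)
qed

lemma
  assumes "mu > mu_extremal"
  shows fp0_eq_kappa: "fp0 n l K mu = kappa (kr0 n l K mu)"
    and fp0_eq_kf': "fp0 n l K mu = kf' mu (kr0 n l K mu)"
    and fp0_pos: "fp0 n l K mu > 0"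
proof -
  show "fp0 n l K mu = kf' mu (kr0 n l K mu)"
    unfolding fp0_def using kr0_pos[OF assms] by (rule deriv_kf)
  then show "fp0 n l K mu = kappa (kr0 n l K mu)"
    using kf'_eq_kappa kr0_pos[OF assms] mass_kr0[OF assms] by simp
  then show "fp0 n l K mu > 0"
    using kappa_pos[OF kr0_gt_r_extremal[OF assms]] by simp
qed

lemma isCont_kr0:
  assumes "mu > mu_extremal"
  shows "isCont (kr0 n l K) mu"
proof -
  have "isCont (kr0 n l K) (mass (kr0 n l K mu))"
  proof (rule isCont_inverse_function_Ioi[OF kr0_gt_r_extremal[OF assms]])
    fix z assume "z > r_extremal"
    then show "kr0 n l K (mass z) = z" by (rule kr0_eqI) (rule refl)
    have "z > 0" using \<open>z > r_extremal\<close> r_extremal_nonneg by linarith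
    then show "isCont mass z" by (rule DERIV_isCont[OF mass_has_real_derivative])
  qed
  then show ?thesis using mass_kr0[OF assms] by simp
qed

lemma kr0_has_real_derivative:
  assumes "mu > mu_extremal"
  shows "(kr0 n l K has_real_derivative 2 / (kr0 n l K mu ^ (n - 1) * kappa (kr0 n l K mu))) (at mu)"
proof -
  let ?r = "kr0 n l K mu"
  have "(kr0 n l K has_real_derivative inverse (?r ^ (n - 1) * kappa ?r / 2)) (at mu)"
  proof (rule DERIV_inverse_function[where f = mass and a = mu_extremal and b = "mu + 1"])
    show "(mass has_real_derivative ?r ^ (n - 1) * kappa ?r / 2) (at ?r)"
      by (rule mass_has_real_derivative[OF kr0_pos[OF assms]])
    show "?r ^ (n - 1) * kappa ?r / 2 \<noteq> 0"
      using kr0_pos[OF assms] kappa_pos[OF kr0_gt_r_extremal[OF assms]] by simp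
    fix y assume "mu_extremal < y"
    then show "mass (kr0 n l K y) = y" by (rule mass_kr0)
  qed (use assms isCont_kr0[OF assms] in auto)
  then show ?thesis by (simp add: inverse_eq_divide)
qed

lemma kappa_has_real_derivative:
  assumes "r > 0"
  shows "(kappa has_real_derivative (real n + 1) / l\<^sup>2 - (real n - 1) * K / r\<^sup>2) (at r)"
  unfolding kappa_def [abs_def] using assms l_pos
  by (auto intro!: derivative_eq_intros simp: field_simps power2_eq_square)

lemma fp0_has_real_derivative:
  assumes mu: "mu > mu_extremal"
  defines "r \<equiv> kr0 n l K mu"
  shows "(fp0 n l K has_real_derivative
      ((real n + 1) / l\<^sup>2 - (real n - 1) * K / r\<^sup>2) * (2 / (r ^ (n - 1) * kappa r))) (at mu)"
proof -
  have "((kappa \<circ> kr0 n l K) has_real_derivative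
      ((real n + 1) / l\<^sup>2 - (real n - 1) * K / r\<^sup>2) * (2 / (r ^ (n - 1) * kappa r))) (at mu)"
    unfolding r_def
    by (rule DERIV_chain[OF kappa_has_real_derivative[OF kr0_pos[OF mu]] kr0_has_real_derivative[OF mu]])
  then show ?thesis
  proof (rule has_field_derivative_transform_within_open[where S = "{mu_extremal<..}"])
    fix m assume "m \<in> {mu_extremal<..}"
    then show "(kappa \<circ> kr0 n l K) m = fp0 n l K m" using fp0_eq_kappa by simp
  qed (use mu in auto)
qed

lemma kappa_deriv_eq_0_iff:
  assumes "r > 0"
  shows "(real n + 1) / l\<^sup>2 - (real n - 1) * K / r\<^sup>2 = 0 \<longleftrightarrow> K = 1 \<and> r = r_crit"
proof -
  have "(real n + 1) / l\<^sup>2 - (real n - 1) * K / r\<^sup>2 = 0 \<longleftrightarrow> r\<^sup>2 * (real n + 1) = (real n - 1) * K * l\<^sup>2"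
    using assms l_pos by (auto simp: field_simps)
  also have "\<dots> \<longleftrightarrow> K = 1 \<and> r\<^sup>2 = r_crit\<^sup>2"
  proof (cases "K = 1")
    case True
    then show ?thesis using l_pos by (simp add: r_crit_sq field_simps)
  next
    case False
    then have "real_of_int K \<le> 0" using K_cases by auto
    then have "(real n - 1) * K * l\<^sup>2 \<le> 0"
      using n_ge_2 by (intro mult_nonpos_nonneg mult_nonneg_nonpos) auto
    moreover have "r\<^sup>2 * (real n + 1) > 0" using assms by simp
    ultimately show ?thesis using False by auto
  qed
  also have "\<dots> \<longleftrightarrow> K = 1 \<and> r = r_crit"
    using assms r_crit_pos by (auto simp: power2_eq_iff_nonneg)
  finally show ?thesis .
qed

lemma deriv_fp0_eq_0_iff:
  assumes "mu > mu_extremal"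
  shows "deriv (fp0 n l K) mu = 0 \<longleftrightarrow> K = 1 \<and> kr0 n l K mu = r_crit"
proof -
  define r where "r = kr0 n l K mu"
  define A where "A = (real n + 1) / l\<^sup>2 - (real n - 1) * K / r\<^sup>2"
  define B where "B = 2 / (r ^ (n - 1) * kappa r)"
  have "B \<noteq> 0"
    using kr0_pos[OF assms] kappa_pos[OF kr0_gt_r_extremal[OF assms]] by (simp add: B_def r_def)
  have "deriv (fp0 n l K) mu = A * B"
    unfolding A_def B_def r_def by (rule DERIV_imp_deriv[OF fp0_has_real_derivative[OF assms]])
  then have "deriv (fp0 n l K) mu = 0 \<longleftrightarrow> A = 0" using \<open>B \<noteq> 0\<close> by simp
  also have "\<dots> \<longleftrightarrow> K = 1 \<and> r = r_crit"
    unfolding A_def r_def by (rule kappa_deriv_eq_0_iff[OF kr0_pos[OF assms]])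
  finally show ?thesis by (simp add: r_def)
qed

lemma kr0_eq_r_crit_iff:
  assumes "K = 1" "mu > mu_extremal"
  shows "kr0 n l K mu = r_crit \<longleftrightarrow> mu = mu_crit n l"
proof -
  have "mass r_crit = mu_crit n l"
  proof -
    have "r_crit\<^sup>2 / l\<^sup>2 + 1 = 2 * real n / (real n + 1)"
      by (simp add: r_crit_sq_div_l_sq field_simps)
    moreover have "mass r_crit = r_crit ^ (n - 1) * (r_crit\<^sup>2 / l\<^sup>2 + 1) / 2"
      unfolding mass_def using \<open>K = 1\<close> by simp
    ultimately have "mass r_crit = r_crit ^ (n - 1) * (2 * real n / (real n + 1)) / 2"
      by (simp only:)
    then show ?thesis
      unfolding mu_crit_def r_crit_def [symmetric] by (simp add: field_simps)
  qed
  moreover have "r_crit > r_extremal"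
    unfolding r_extremal_def using \<open>K = 1\<close> r_crit_pos by simp
  ultimately show ?thesis
    using kr0_eqI mass_kr0[OF assms(2)] by auto
qed

section \<open>The coordinate rho\<close>

lemma kf'_eq: "r > 0 \<Longrightarrow> kf' mu r = 2 * (r ^ (n + 1) / l\<^sup>2 + (real n - 1) * mu) / r ^ n"
  by (simp add: kf'_def field_simps)

lemma kf'_pos_iff:
  assumes "r > 0"
  shows "kf' mu r > 0 \<longleftrightarrow> r ^ (n + 1) / l\<^sup>2 + (real n - 1) * mu > 0"
proof -
  have "kf' mu r = 2 / r ^ n * (r ^ (n + 1) / l\<^sup>2 + (real n - 1) * mu)"
    using kf'_eq[OF assms] by simp
  moreover have "2 / r ^ n > 0" using assms by simp
  ultimately show ?thesis by (metis mult_pos_pos zero_less_mult_pos)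
qed

lemma kf'_pos_mono:
  assumes "0 < r" "r \<le> s" "kf' mu r > 0"
  shows "kf' mu s > 0"
proof -
  have "r ^ (n + 1) / l\<^sup>2 \<le> s ^ (n + 1) / l\<^sup>2"
    using assms by (intro divide_right_mono power_mono) auto
  then show ?thesis using assms kf'_pos_iff[of r] kf'_pos_iff[of s] by simp
qed

lemma kf_strict_mono:
  assumes "0 < r" "r < s" "kf' mu r > 0"
  shows "kf n l K mu r < kf n l K mu s"
proof (rule DERIV_pos_imp_increasing[OF \<open>r < s\<close>])
  fix x assume "r \<le> x" "x \<le> s"
  then have "x > 0" "kf' mu x > 0" using assms kf'_pos_mono[of r x] by auto
  then show "\<exists>y. (kf n l K mu has_real_derivative y) (at x) \<and> 0 < y"
    using kf_has_real_derivative by blast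
qed

lemma kf'_pos:
  assumes "mu > mu_extremal" "kr0 n l K mu \<le> r"
  shows "kf' mu r > 0"
  using kf'_pos_mono[OF kr0_pos[OF assms(1)] assms(2)] fp0_eq_kf'[OF assms(1)] fp0_pos[OF assms(1)]
  by simp

lemma kf_kr0: "mu > mu_extremal \<Longrightarrow> kf n l K mu (kr0 n l K mu) = 0"
  using kf_eq_0_iff kr0_pos mass_kr0 by blast

lemma kf_nonneg:
  assumes "mu > mu_extremal" "kr0 n l K mu \<le> r"
  shows "kf n l K mu r \<ge> 0"
proof (cases "r = kr0 n l K mu")
  case False
  then have "kf n l K mu (kr0 n l K mu) < kf n l K mu r"
    using assms kr0_pos kf'_pos by (intro kf_strict_mono) auto
  then show ?thesis using kf_kr0[OF assms(1)] by simp
qed (simp add: kf_kr0[OF assms(1)])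

lemma krho_strict_mono:
  assumes "mu > mu_extremal" "kr0 n l K mu \<le> r" "r < s"
  shows "krho n l K mu r < krho n l K mu s"
proof -
  have "r > 0" using kr0_pos[OF assms(1)] assms(2) by linarith
  then have "kf n l K mu r < kf n l K mu s"
    using assms(3) kf'_pos[OF assms(1,2)] by (rule kf_strict_mono)
  then have "sqrt (kf n l K mu r) < sqrt (kf n l K mu s)" by simp
  then show ?thesis using fp0_pos[OF assms(1)] by (simp add: krho_def divide_strict_right_mono)
qed

lemma krho_kr0: "mu > mu_extremal \<Longrightarrow> krho n l K mu (kr0 n l K mu) = 0"
  by (simp add: krho_def kf_kr0)

lemma kf_ge_half_sq:
  assumes "r \<ge> 1" "r \<ge> 2 * l\<^sup>2 * (1 + 2 * \<bar>mu\<bar>)"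
  shows "kf n l K mu r \<ge> r\<^sup>2 / (2 * l\<^sup>2)"
proof -
  have "r\<^sup>2 \<ge> r" using assms(1) by (simp add: power2_eq_square)
  then have "r\<^sup>2 / (2 * l\<^sup>2) \<ge> 1 + 2 * \<bar>mu\<bar>"
    using assms(2) l_pos by (simp add: field_simps)
  moreover have "2 * mu / r ^ (n - 1) \<le> 2 * \<bar>mu\<bar> / 1"
    using assms(1) by (intro frac_le) auto
  moreover have "real_of_int K \<ge> -1" using K_cases by auto
  moreover have "r\<^sup>2 / l\<^sup>2 = 2 * (r\<^sup>2 / (2 * l\<^sup>2))" by simp
  ultimately show ?thesis unfolding kf_def by linarith
qed

lemma ex_krho_eq:
  assumes "mu > mu_extremal" "rho \<ge> 0"
  shows "\<exists>r \<ge> kr0 n l K mu. krho n l K mu r = rho"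
proof -
  define c where "c = fp0 n l K mu"
  have "c > 0" using fp0_pos[OF assms(1)] by (simp add: c_def)
  define b where "b = Max {1, kr0 n l K mu, 2 * l\<^sup>2 * (1 + 2 * \<bar>mu\<bar>), 2 * l\<^sup>2 * (rho * c / 2)\<^sup>2}"
  have b: "b \<ge> 1" "b \<ge> kr0 n l K mu" "b \<ge> 2 * l\<^sup>2 * (1 + 2 * \<bar>mu\<bar>)" "b \<ge> 2 * l\<^sup>2 * (rho * c / 2)\<^sup>2"
    by (simp_all add: b_def)
  have "kf n l K mu b \<ge> b\<^sup>2 / (2 * l\<^sup>2)" using b(1,3) by (rule kf_ge_half_sq)
  moreover have "b\<^sup>2 / (2 * l\<^sup>2) \<ge> (rho * c / 2)\<^sup>2"
  proof -
    have "b\<^sup>2 \<ge> b" using b(1) by (simp add: power2_eq_square)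
    then show ?thesis using b(4) l_pos by (simp add: field_simps)
  qed
  ultimately have "sqrt (kf n l K mu b) \<ge> rho * c / 2"
    by (intro real_le_rsqrt) linarith
  then have "krho n l K mu b \<ge> rho" using \<open>c > 0\<close> by (simp add: krho_def c_def [symmetric] field_simps)
  moreover have "krho n l K mu (kr0 n l K mu) \<le> rho" using krho_kr0[OF assms(1)] assms(2) by simp
  moreover have "continuous_on {kr0 n l K mu..b} (krho n l K mu)"
    unfolding krho_def [abs_def] kf_def using kr0_pos[OF assms(1)] l_pos \<open>c > 0\<close>
    by (intro continuous_intros) (auto simp: c_def)
  ultimately show ?thesis using IVT'[of "krho n l K mu" "kr0 n l K mu" rho b] b(2) by auto
qed

lemma
  assumes "mu > mu_extremal" "rho \<ge> 0"
  shows kr_of_rho_ge_kr0: "kr_of_rho n l K mu rho \<ge> kr0 n l K mu"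
    and krho_kr_of_rho: "krho n l K mu (kr_of_rho n l K mu rho) = rho"
proof -
  have "\<exists>!r. r \<ge> kr0 n l K mu \<and> krho n l K mu r = rho"
  proof (rule ex_ex1I)
    show "\<exists>r. r \<ge> kr0 n l K mu \<and> krho n l K mu r = rho" using ex_krho_eq[OF assms] by blast
    fix r s assume "r \<ge> kr0 n l K mu \<and> krho n l K mu r = rho" "s \<ge> kr0 n l K mu \<and> krho n l K mu s = rho"
    then show "r = s" using krho_strict_mono[OF assms(1)] by (metis less_irrefl linorder_neqE)
  qed
  from theI'[OF this] show "kr_of_rho n l K mu rho \<ge> kr0 n l K mu" "krho n l K mu (kr_of_rho n l K mu rho) = rho"
    unfolding kr_of_rho_def by auto
qed

lemma kr_of_rho_pos: "mu > mu_extremal \<Longrightarrow> rho \<ge> 0 \<Longrightarrow> kr_of_rho n l K mu rho > 0"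
  using kr_of_rho_ge_kr0 kr0_pos by (meson less_le_trans)

lemma krho_nonneg: "mu > mu_extremal \<Longrightarrow> kr0 n l K mu \<le> r \<Longrightarrow> krho n l K mu r \<ge> 0"
  using kf_nonneg[of mu r] fp0_pos[of mu] by (simp add: krho_def)

lemma kr_of_rho_krho:
  assumes "mu > mu_extremal" "kr0 n l K mu \<le> r"
  shows "kr_of_rho n l K mu (krho n l K mu r) = r"
proof -
  let ?rho = "krho n l K mu r"
  have "?rho \<ge> 0" using krho_nonneg[OF assms] .
  then show ?thesis
    using krho_strict_mono[OF assms(1)] kr_of_rho_ge_kr0[OF assms(1)] krho_kr_of_rho[OF assms(1)] assms(2)
    by (metis less_irrefl linorder_neqE)
qed

lemma kf_kr_of_rho:
  assumes "mu > mu_extremal" "rho \<ge> 0"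
  shows "kf n l K mu (kr_of_rho n l K mu rho) = rho\<^sup>2 * (fp0 n l K mu)\<^sup>2 / 4"
proof -
  let ?f = "kf n l K mu (kr_of_rho n l K mu rho)"
  have "?f \<ge> 0" using kf_nonneg[OF assms(1) kr_of_rho_ge_kr0[OF assms]] .
  moreover have "sqrt ?f = rho * fp0 n l K mu / 2"
    using krho_kr_of_rho[OF assms] fp0_pos[OF assms(1)] by (simp add: krho_def field_simps)
  ultimately have "?f = (rho * fp0 n l K mu / 2)\<^sup>2" by (metis real_sqrt_pow2)
  then show ?thesis by (simp add: power_mult_distrib power_divide)
qed

lemma isCont_kr_of_rho:
  assumes "mu > mu_extremal" "rho > 0"
  shows "isCont (kr_of_rho n l K mu) rho"
proof -
  let ?r = "kr_of_rho n l K mu rho"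
  have "krho n l K mu ?r = rho" using krho_kr_of_rho[OF assms(1)] assms(2) by simp
  then have "?r \<noteq> kr0 n l K mu" using krho_kr0[OF assms(1)] assms(2) by auto
  moreover have "?r \<ge> kr0 n l K mu" using kr_of_rho_ge_kr0[OF assms(1)] assms(2) by simp
  ultimately have "?r > kr0 n l K mu" by simp
  then have "isCont (kr_of_rho n l K mu) (krho n l K mu ?r)"
  proof (rule isCont_inverse_function_Ioi)
    fix z assume "z > kr0 n l K mu"
    then show "kr_of_rho n l K mu (krho n l K mu z) = z" using kr_of_rho_krho[OF assms(1)] by simp
    have "z > 0" using \<open>z > kr0 n l K mu\<close> kr0_pos[OF assms(1)] by linarith
    then show "isCont (krho n l K mu) z"
      unfolding krho_def [abs_def] kf_def using l_pos fp0_pos[OF assms(1)]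
      by (intro continuous_intros) auto
  qed
  then show ?thesis using krho_kr_of_rho[OF assms(1)] assms(2) by simp
qed

lemma filterlim_kr_of_rho_at_top:
  assumes "mu > mu_extremal"
  shows "filterlim (kr_of_rho n l K mu) at_top at_top"
  unfolding filterlim_at_top
proof
  fix Z
  let ?z = "max Z (kr0 n l K mu)"
  have "eventually (\<lambda>rho. rho \<ge> max 0 (krho n l K mu ?z)) at_top" by (rule eventually_ge_at_top)
  then show "eventually (\<lambda>rho. Z \<le> kr_of_rho n l K mu rho) at_top"
  proof (rule eventually_mono)
    fix rho assume rho: "rho \<ge> max 0 (krho n l K mu ?z)"
    show "Z \<le> kr_of_rho n l K mu rho"
    proof (rule ccontr)
      assume "\<not> Z \<le> kr_of_rho n l K mu rho"
      then have "krho n l K mu (kr_of_rho n l K mu rho) < krho n l K mu ?z"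
        using rho assms by (intro krho_strict_mono kr_of_rho_ge_kr0) auto
      then show False using rho krho_kr_of_rho[OF assms] by simp
    qed
  qed
qed

section \<open>Derivatives in mu at fixed rho\<close>

lemma fp0_has_real_derivative_deriv:
  "mu > mu_extremal \<Longrightarrow> (fp0 n l K has_real_derivative deriv (fp0 n l K) mu) (at mu)"
  using fp0_has_real_derivative DERIV_imp_deriv by metis

lemma continuous_on_fp0: "continuous_on {mu_extremal<..} (fp0 n l K)"
  by (rule continuous_at_imp_continuous_on) (use fp0_has_real_derivative DERIV_isCont in auto)

lemma kf_has_derivative_pair:
  assumes "r > 0"
  shows "((\<lambda>x. kf n l K (fst x) (snd x)) has_derivative
      (\<lambda>h. - 2 / r ^ (n - 1) * fst h + kf' m r * snd h)) (at (m, r))"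
proof -
  obtain k where n: "n = Suc (Suc k)" by (rule obtain_n_Suc_Suc)
  show ?thesis
    unfolding kf_def kf'_def
    apply (rule has_derivative_eq_rhs)
     apply (use assms l_pos in \<open>auto intro!: derivative_eq_intros\<close>)[1]
    using assms l_pos by (simp add: fun_eq_iff n field_simps power2_eq_square)
qed

lemma kf_eq_imp_eq:
  assumes "0 < y" "0 < z" "kf' m y > 0" "kf' m z > 0" "kf n l K m y = kf n l K m z"
  shows "y = z"
  using assms kf_strict_mono[of y z m] kf_strict_mono[of z y m] by (metis less_irrefl linorder_neqE)

lemma kr_of_rho_equation_has_derivative:
  assumes mu: "mu > mu_extremal" and "r > 0"
  shows "((\<lambda>x. kf n l K (fst x) (snd x) - rho\<^sup>2 * (fp0 n l K (fst x))\<^sup>2 / 4) has_derivative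
      (\<lambda>h. (- 2 / r ^ (n - 1) - rho\<^sup>2 * fp0 n l K mu * deriv (fp0 n l K) mu / 2) * fst h
        + kf' mu r * snd h)) (at (mu, r))"
proof -
  have "(fp0 n l K has_derivative (*) (deriv (fp0 n l K) mu)) (at (fst (mu, r)))"
    using fp0_has_real_derivative_deriv[OF mu] by (simp add: has_field_derivative_def)
  from has_derivative_compose[OF has_derivative_fst[OF has_derivative_ident] this]
  have "((\<lambda>x. fp0 n l K (fst x)) has_derivative (\<lambda>h. deriv (fp0 n l K) mu * fst h)) (at (mu, r))"
    by simp
  then show ?thesis
    using kf_has_derivative_pair[OF \<open>r > 0\<close>, of mu]
    by (auto intro!: derivative_eq_intros simp: fun_eq_iff algebra_simps)
qed

(* d r / d mu at fixed rho: differentiate kf mu r = rho^2 fp0(mu)^2 / 4 and eliminate rho. *)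
definition r_dmu :: "real \<Rightarrow> real \<Rightarrow> real" where
  "r_dmu mu r =
     (2 / r ^ (n - 1) + 2 * deriv (fp0 n l K) mu * kf n l K mu r / fp0 n l K mu) / kf' mu r"

lemma kr_of_rho_has_real_derivative_mu:
  assumes mu: "mu > mu_extremal" and "rho > 0"
  shows "((\<lambda>m. kr_of_rho n l K m rho) has_real_derivative r_dmu mu (kr_of_rho n l K mu rho)) (at mu)"
proof -
  define F where "F x = kf n l K (fst x) (snd x) - rho\<^sup>2 * (fp0 n l K (fst x))\<^sup>2 / 4" for x
  \<comment> \<open>the region where \<open>kf' > 0\<close> (by \<open>kf'_pos_iff\<close>), in a form that is visibly open\<close>
  define S where "S = {x. mu_extremal < fst x \<and> 0 < snd x \<and> 0 < snd x ^ (n + 1) / l\<^sup>2 + (real n - 1) * fst x}"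
  define R where "R = kr_of_rho n l K mu rho"
  define c where "c = fp0 n l K mu"
  define c' where "c' = deriv (fp0 n l K) mu"
  have "R > 0" "c > 0" "kf' mu R > 0"
    using kr_of_rho_pos[OF mu] fp0_pos[OF mu] kf'_pos[OF mu kr_of_rho_ge_kr0[OF mu]] \<open>rho > 0\<close>
    by (simp_all add: R_def c_def)
  have "open S"
    unfolding S_def using l_pos by (intro open_Collect_conj open_Collect_less continuous_intros) auto
  moreover have "continuous_on S F"
  proof -
    have "continuous_on S (\<lambda>x. fp0 n l K (fst x))"
      by (rule continuous_on_compose2[OF continuous_on_fp0 continuous_on_fst[OF continuous_on_id]])
        (auto simp: S_def)
    then show ?thesis
      unfolding F_def kf_def using l_pos by (intro continuous_intros) (auto simp: S_def)
  qed
  moreover have "y = z" if "(m, y) \<in> S" "(m, z) \<in> S" "F (m, y) = F (m, z)" for m y z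
    using that kf'_pos_iff by (intro kf_eq_imp_eq[of y z m]) (auto simp: S_def F_def)
  moreover have "(m, kr_of_rho n l K m rho) \<in> S \<and> F (m, kr_of_rho n l K m rho) = 0"
    if "m \<in> {mu_extremal<..}" for m
  proof -
    have "m > mu_extremal" using that by simp
    then have "kr_of_rho n l K m rho > 0" "kf' m (kr_of_rho n l K m rho) > 0"
      using kr_of_rho_pos kf'_pos kr_of_rho_ge_kr0 \<open>rho > 0\<close> by auto
    then show ?thesis
      using \<open>m > mu_extremal\<close> kf'_pos_iff kf_kr_of_rho \<open>rho > 0\<close> by (simp add: S_def F_def)
  qed
  moreover have "(F has_derivative
      (\<lambda>h. (- 2 / R ^ (n - 1) - rho\<^sup>2 * c * c' / 2) * fst h + kf' mu R * snd h)) (at (mu, R))"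
    unfolding F_def c_def c'_def using kr_of_rho_equation_has_derivative[OF mu \<open>R > 0\<close>] .
  ultimately have "((\<lambda>m. kr_of_rho n l K m rho) has_real_derivative
      - (- 2 / R ^ (n - 1) - rho\<^sup>2 * c * c' / 2) / kf' mu R) (at mu)"
    using mu \<open>kf' mu R > 0\<close>
    by (intro implicit_function_has_real_derivative[where U = "{mu_extremal<..}"]) (auto simp: R_def)
  moreover have "rho\<^sup>2 * c * c' / 2 = 2 * c' * kf n l K mu R / c"
    using kf_kr_of_rho[OF mu] \<open>rho > 0\<close> \<open>c > 0\<close> by (simp add: R_def c_def field_simps power2_eq_square)
  ultimately show ?thesis
    unfolding r_dmu_def R_def [symmetric] c_def [symmetric] c'_def [symmetric]
    by (simp add: add.commute)
qed

definition kf'_dmu :: "real \<Rightarrow> real \<Rightarrow> real" where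
  "kf'_dmu mu r =
     2 * r_dmu mu r / l\<^sup>2 + 2 * (real n - 1) / r ^ n - 2 * real n * (real n - 1) * mu * r_dmu mu r / r ^ (n + 1)"

lemma kf'_kr_of_rho_has_real_derivative_mu:
  assumes "mu > mu_extremal" and "rho > 0"
  shows "((\<lambda>m. kf' m (kr_of_rho n l K m rho)) has_real_derivative kf'_dmu mu (kr_of_rho n l K mu rho)) (at mu)"
proof -
  obtain k where n: "n = Suc (Suc k)" by (rule obtain_n_Suc_Suc)
  define R where "R = kr_of_rho n l K mu rho"
  define P where "P = r_dmu mu R"
  have "R > 0" using kr_of_rho_pos assms by (simp add: R_def)
  note R_deriv = kr_of_rho_has_real_derivative_mu[OF assms]
  show ?thesis
    unfolding kf'_def
    apply (rule DERIV_cong)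
     apply (use \<open>R > 0\<close> l_pos R_deriv in \<open>auto intro!: derivative_eq_intros simp: R_def\<close>)[1]
    unfolding kf'_dmu_def R_def [symmetric] P_def [symmetric]
    using \<open>R > 0\<close> l_pos by (simp add: n field_simps power2_eq_square)
qed

lemma gA_eq:
  assumes "mu > mu_extremal" "rho \<ge> 0"
  shows "gA n l K mu rho = (fp0 n l K mu / kf' mu (kr_of_rho n l K mu rho))\<^sup>2"
  using kr_of_rho_pos[OF assms] by (simp add: gA_def deriv_kf power_divide)

lemma gA_has_real_derivative_mu:
  assumes mu: "mu > mu_extremal" and "rho > 0"
  defines "R \<equiv> kr_of_rho n l K mu rho"
  shows "((\<lambda>m. gA n l K m rho) has_real_derivative gA n l K mu rho *
      (2 * deriv (fp0 n l K) mu / fp0 n l K mu - 2 * kf'_dmu mu R / kf' mu R)) (at mu)"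
proof -
  define c where "c = fp0 n l K mu"
  define D where "D = kf' mu R"
  have "c > 0" "D > 0"
    using fp0_pos[OF mu] kf'_pos[OF mu kr_of_rho_ge_kr0[OF mu]] \<open>rho > 0\<close> by (auto simp: c_def D_def R_def)
  have "gA n l K mu rho = (c / D)\<^sup>2"
    using gA_eq[OF mu] \<open>rho > 0\<close> by (simp add: c_def D_def R_def)
  have "((\<lambda>m. (fp0 n l K m / kf' m (kr_of_rho n l K m rho))\<^sup>2) has_real_derivative
      gA n l K mu rho * (2 * deriv (fp0 n l K) mu / c - 2 * kf'_dmu mu R / D)) (at mu)"
    apply (rule DERIV_cong)
     apply (use \<open>D > 0\<close> fp0_has_real_derivative_deriv[OF mu]
        kf'_kr_of_rho_has_real_derivative_mu[OF assms(1,2)]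
        in \<open>auto intro!: derivative_eq_intros simp: D_def R_def\<close>)[1]
    unfolding c_def [symmetric] D_def [symmetric] R_def [symmetric] \<open>gA n l K mu rho = (c / D)\<^sup>2\<close>
    using \<open>c > 0\<close> \<open>D > 0\<close> by (simp add: field_simps power2_eq_square)
  then show ?thesis unfolding c_def D_def
  proof (rule has_field_derivative_transform_within_open[where S = "{mu_extremal<..}"])
    fix m assume "m \<in> {mu_extremal<..}"
    then show "(fp0 n l K m / kf' m (kr_of_rho n l K m rho))\<^sup>2 = gA n l K m rho"
      using gA_eq \<open>rho > 0\<close> by simp
  qed (use mu in auto)
qed

lemma gB_has_real_derivative_mu:
  assumes "mu > mu_extremal" and "rho > 0"
  defines "R \<equiv> kr_of_rho n l K mu rho"
  shows "((\<lambda>m. gB n l K m rho) has_real_derivative gB n l K mu rho * (2 * r_dmu mu R / R)) (at mu)"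
  unfolding gB_def R_def using kr_of_rho_pos[OF assms(1)] \<open>rho > 0\<close>
  by (auto intro!: derivative_eq_intros kr_of_rho_has_real_derivative_mu[OF assms(1,2)]
      simp: power2_eq_square)

section \<open>Square integrability of the variation\<close>

(* var_norm_sq and vol_density as functions of r = kr_of_rho mu rho, using rho fp0(mu) = 2 sqrt (kf mu r). *)
definition var_norm_sq_r :: "real \<Rightarrow> real \<Rightarrow> real" where
  "var_norm_sq_r mu r = (2 * deriv (fp0 n l K) mu / fp0 n l K mu - 2 * kf'_dmu mu r / kf' mu r)\<^sup>2
     + real n * (2 * r_dmu mu r / r)\<^sup>2"

definition vol_density_r :: "real \<Rightarrow> real \<Rightarrow> real" where
  "vol_density_r mu r = 2 * sqrt (kf n l K mu r) * r ^ n / kf' mu r"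

lemma
  assumes mu: "mu > mu_extremal" and "rho > 0"
  shows var_norm_sq_eq: "var_norm_sq n l K mu rho = var_norm_sq_r mu (kr_of_rho n l K mu rho)"
    and vol_density_eq: "vol_density n l K mu rho = vol_density_r mu (kr_of_rho n l K mu rho)"
proof -
  define R where "R = kr_of_rho n l K mu rho"
  have "rho \<ge> 0" using \<open>rho > 0\<close> by simp
  have pos: "fp0 n l K mu > 0" "kf' mu R > 0" "R > 0"
    using fp0_pos[OF mu] kf'_pos[OF mu kr_of_rho_ge_kr0[OF mu \<open>rho \<ge> 0\<close>]] kr_of_rho_pos[OF mu \<open>rho \<ge> 0\<close>]
    by (simp_all add: R_def)
  then have "gA n l K mu rho > 0" "gB n l K mu rho > 0"
    by (simp_all add: gA_eq[OF mu \<open>rho \<ge> 0\<close>] gB_def R_def)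
  then show "var_norm_sq n l K mu rho = var_norm_sq_r mu (kr_of_rho n l K mu rho)"
    unfolding var_norm_sq_def var_norm_sq_r_def
    using DERIV_imp_deriv[OF gA_has_real_derivative_mu[OF mu \<open>rho > 0\<close>]]
      DERIV_imp_deriv[OF gB_has_real_derivative_mu[OF mu \<open>rho > 0\<close>]]
    by simp
  show "vol_density n l K mu rho = vol_density_r mu (kr_of_rho n l K mu rho)"
    using pos krho_kr_of_rho[OF mu \<open>rho \<ge> 0\<close>]
    by (simp add: vol_density_def vol_density_r_def gA_eq[OF mu \<open>rho \<ge> 0\<close>] real_sqrt_divide
        krho_def R_def field_simps)
qed

lemma L2_integrand_nonneg:
  assumes "mu > mu_extremal" and "rho \<ge> 0"
  shows "var_norm_sq n l K mu rho * vol_density n l K mu rho \<ge> 0"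
  using assms kr_of_rho_pos[OF assms] by (simp add: var_norm_sq_def vol_density_def gA_def)

lemma continuous_on_L2_integrand:
  assumes mu: "mu > mu_extremal"
  shows "continuous_on {0<..} (\<lambda>rho. var_norm_sq n l K mu rho * vol_density n l K mu rho)"
proof -
  have R: "continuous_on {0<..} (kr_of_rho n l K mu)"
    using isCont_kr_of_rho[OF mu] by (intro continuous_at_imp_continuous_on) auto
  have R_pos: "\<forall>rho\<in>{0<..}. kr_of_rho n l K mu rho \<noteq> 0"
    using kr_of_rho_pos[OF mu] by (metis greaterThan_iff less_eq_real_def less_irrefl)
  have D_pos: "\<forall>rho\<in>{0<..}. kf' mu (kr_of_rho n l K mu rho) \<noteq> 0"
    using kf'_pos[OF mu kr_of_rho_ge_kr0[OF mu]] by (metis greaterThan_iff less_eq_real_def less_irrefl)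
  have "continuous_on {0<..}
      (\<lambda>rho. var_norm_sq_r mu (kr_of_rho n l K mu rho) * vol_density_r mu (kr_of_rho n l K mu rho))"
    unfolding var_norm_sq_r_def vol_density_r_def kf'_dmu_def r_dmu_def kf'_def kf_def
    using R R_pos D_pos fp0_pos[OF mu] l_pos unfolding kf'_def
    by (intro continuous_intros) auto
  then show ?thesis
    by (rule continuous_on_eq) (simp add: var_norm_sq_eq[OF mu] vol_density_eq[OF mu])
qed

lemma kf'_le:
  assumes "r \<ge> 1" "r \<ge> 2 * (real n - 1) * \<bar>mu\<bar> * l\<^sup>2"
  shows "kf' mu r \<le> 3 * r / l\<^sup>2"
proof -
  have "2 * (real n - 1) * mu / r ^ n \<le> 2 * (real n - 1) * \<bar>mu\<bar> / 1"
    using assms(1) n_ge_2 by (intro frac_le mult_left_mono) auto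
  also have "\<dots> \<le> r / l\<^sup>2" using assms(2) l_pos by (simp add: field_simps)
  finally show ?thesis by (simp add: kf'_def)
qed

lemma abs_r_dmu_ge:
  assumes mu: "mu > mu_extremal"
  defines "c \<equiv> fp0 n l K mu" and "c' \<equiv> deriv (fp0 n l K) mu"
  assumes "r \<ge> 1" "kf n l K mu r \<ge> r\<^sup>2 / (2 * l\<^sup>2)" "0 < kf' mu r" "kf' mu r \<le> 3 * r / l\<^sup>2"
    and "2 / r ^ (n - 1) \<le> \<bar>c'\<bar> * r\<^sup>2 / (2 * l\<^sup>2 * c)"
  shows "\<bar>r_dmu mu r\<bar> \<ge> \<bar>c'\<bar> * r / (6 * c)"
proof -
  define a where "a = 2 / r ^ (n - 1)"
  define b where "b = 2 * c' * kf n l K mu r / c"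
  define y where "y = \<bar>c'\<bar> * r\<^sup>2 / (2 * l\<^sup>2 * c)"
  have "c > 0" using fp0_pos[OF mu] by (simp add: c_def)
  have "0 \<le> r\<^sup>2 / (2 * l\<^sup>2)" by simp
  then have "kf n l K mu r \<ge> 0" using assms(5) by linarith
  have "\<bar>b\<bar> = 2 * \<bar>c'\<bar> * kf n l K mu r / c"
    using \<open>kf n l K mu r \<ge> 0\<close> \<open>c > 0\<close> by (simp add: b_def abs_mult)
  also have "\<dots> \<ge> 2 * \<bar>c'\<bar> * (r\<^sup>2 / (2 * l\<^sup>2)) / c"
    using assms(5) \<open>c > 0\<close> by (intro divide_right_mono mult_left_mono) auto
  also have "2 * \<bar>c'\<bar> * (r\<^sup>2 / (2 * l\<^sup>2)) / c = 2 * y" by (simp add: y_def)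
  finally have "\<bar>b\<bar> \<ge> 2 * y" .
  moreover have "0 \<le> a" "a \<le> y" using assms(4,8) by (simp_all add: a_def y_def)
  moreover have "\<bar>b\<bar> \<le> \<bar>a + b\<bar> + \<bar>a\<bar>" using abs_triangle_ineq4[of "a + b" a] by simp
  ultimately have "\<bar>a + b\<bar> \<ge> y" by linarith
  then have "\<bar>r_dmu mu r\<bar> \<ge> y / (3 * r / l\<^sup>2)"
    unfolding r_dmu_def c_def [symmetric] c'_def [symmetric] abs_divide a_def b_def
    using assms(6,7) by (intro frac_le) (auto simp: y_def mult.commute)
  also have "y / (3 * r / l\<^sup>2) = \<bar>c'\<bar> * r / (6 * c)"
    using assms(4) l_pos by (simp add: y_def field_simps power2_eq_square)
  finally show ?thesis .
qed

lemma vol_density_r_ge: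
  assumes "r \<ge> 1" "kf n l K mu r \<ge> r\<^sup>2 / (2 * l\<^sup>2)" "0 < kf' mu r" "kf' mu r \<le> 3 * r / l\<^sup>2"
  shows "vol_density_r mu r \<ge> l / 3"
proof -
  have "(r / (2 * l))\<^sup>2 \<le> r\<^sup>2 / (2 * l\<^sup>2)"
    using l_pos by (simp add: power_divide field_simps)
  then have "(r / (2 * l))\<^sup>2 \<le> kf n l K mu r" using assms(2) by linarith
  then have "kf n l K mu r \<ge> 0" "r / (2 * l) \<le> sqrt (kf n l K mu r)"
    by (auto intro: order_trans[OF zero_le_power2] real_le_rsqrt)
  moreover have "1 \<le> r ^ n" using assms(1) by simp
  ultimately have "2 * (r / (2 * l)) * 1 \<le> 2 * sqrt (kf n l K mu r) * r ^ n"
    using assms(1) l_pos by (intro mult_mono) auto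
  then have "2 * (r / (2 * l)) * 1 / (3 * r / l\<^sup>2) \<le> vol_density_r mu r"
    unfolding vol_density_r_def
    using assms(1,3,4) l_pos \<open>kf n l K mu r \<ge> 0\<close> by (intro frac_le) auto
  moreover have "2 * (r / (2 * l)) * 1 / (3 * r / l\<^sup>2) = l / 3"
    using assms(1) l_pos by (simp add: field_simps power2_eq_square)
  ultimately show ?thesis by simp
qed

lemma var_norm_sq_r_ge:
  assumes mu: "mu > mu_extremal"
  defines "c \<equiv> fp0 n l K mu" and "c' \<equiv> deriv (fp0 n l K) mu"
  assumes "r \<ge> 1" "kf n l K mu r \<ge> r\<^sup>2 / (2 * l\<^sup>2)" "0 < kf' mu r" "kf' mu r \<le> 3 * r / l\<^sup>2"
    and "2 / r ^ (n - 1) \<le> \<bar>c'\<bar> * r\<^sup>2 / (2 * l\<^sup>2 * c)"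
  shows "var_norm_sq_r mu r \<ge> real n * (c' / (3 * c))\<^sup>2"
proof -
  have "c > 0" using fp0_pos[OF mu] by (simp add: c_def)
  have "\<bar>c'\<bar> * r / (6 * c) \<le> \<bar>r_dmu mu r\<bar>"
    using abs_r_dmu_ge[OF mu assms(4-8)[unfolded c_def c'_def]] by (simp add: c_def c'_def)
  then have "2 * (\<bar>c'\<bar> * r / (6 * c)) / r \<le> 2 * \<bar>r_dmu mu r\<bar> / r"
    using assms(4) by (intro divide_right_mono mult_left_mono) auto
  then have "\<bar>c'\<bar> / (3 * c) \<le> \<bar>2 * r_dmu mu r / r\<bar>"
    using assms(4) by (simp add: abs_mult)
  then have "\<bar>c' / (3 * c)\<bar>\<^sup>2 \<le> \<bar>2 * r_dmu mu r / r\<bar>\<^sup>2"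
    using \<open>c > 0\<close> by (intro power_mono) (auto simp: abs_divide)
  then have "real n * (c' / (3 * c))\<^sup>2 \<le> real n * (2 * r_dmu mu r / r)\<^sup>2"
    by (intro mult_left_mono) (simp_all only: power2_abs of_nat_0_le_iff)
  then show ?thesis unfolding var_norm_sq_r_def c_def c'_def by (rule add_increasing[OF zero_le_power2])
qed

lemma eventually_L2_integrand_r_ge:
  assumes mu: "mu > mu_extremal" and "deriv (fp0 n l K) mu \<noteq> 0"
  defines "c \<equiv> fp0 n l K mu" and "c' \<equiv> deriv (fp0 n l K) mu"
  shows "eventually (\<lambda>r. var_norm_sq_r mu r * vol_density_r mu r \<ge> real n * (c' / (3 * c))\<^sup>2 * (l / 3))
    at_top"
proof -
  have "c > 0" "c' \<noteq> 0" using fp0_pos[OF mu] assms(2) by (simp_all add: c_def c'_def)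
  have "eventually (\<lambda>r. r \<ge> max (max 1 (kr0 n l K mu))
      (max (2 * l\<^sup>2 * (1 + 2 * \<bar>mu\<bar>)) (max (2 * (real n - 1) * \<bar>mu\<bar> * l\<^sup>2) (4 * l\<^sup>2 * c / \<bar>c'\<bar>)))) at_top"
    by (rule eventually_ge_at_top)
  then show ?thesis
  proof (rule eventually_mono)
    fix r
    assume "r \<ge> max (max 1 (kr0 n l K mu))
      (max (2 * l\<^sup>2 * (1 + 2 * \<bar>mu\<bar>)) (max (2 * (real n - 1) * \<bar>mu\<bar> * l\<^sup>2) (4 * l\<^sup>2 * c / \<bar>c'\<bar>)))"
    then have r: "r \<ge> 1" "r \<ge> kr0 n l K mu" "r \<ge> 2 * l\<^sup>2 * (1 + 2 * \<bar>mu\<bar>)"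
      "r \<ge> 2 * (real n - 1) * \<bar>mu\<bar> * l\<^sup>2" "r \<ge> 4 * l\<^sup>2 * c / \<bar>c'\<bar>"
      by simp_all
    note conds = r(1) kf_ge_half_sq[OF r(1,3)] kf'_pos[OF mu r(2)] kf'_le[OF r(1,4)]
    have "2 / r ^ (n - 1) \<le> 2 / 1" using r(1) by (intro divide_left_mono) auto
    also have "2 / 1 \<le> \<bar>c'\<bar> * r / (2 * l\<^sup>2 * c)"
      using r(5) \<open>c > 0\<close> \<open>c' \<noteq> 0\<close> l_pos by (simp add: field_simps)
    also have "\<dots> \<le> \<bar>c'\<bar> * r\<^sup>2 / (2 * l\<^sup>2 * c)"
      using r(1) \<open>c > 0\<close> by (intro divide_right_mono mult_left_mono) (auto simp: power2_eq_square)
    finally have "var_norm_sq_r mu r \<ge> real n * (c' / (3 * c))\<^sup>2"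
      using var_norm_sq_r_ge[OF mu conds] by (simp add: c_def c'_def)
    then show "var_norm_sq_r mu r * vol_density_r mu r \<ge> real n * (c' / (3 * c))\<^sup>2 * (l / 3)"
      using vol_density_r_ge[OF conds] l_pos by (intro mult_mono) (auto simp: var_norm_sq_r_def)
  qed
qed

lemma not_variation_L2_if_deriv_fp0_neq_0:
  assumes mu: "mu > mu_extremal" and "deriv (fp0 n l K) mu \<noteq> 0"
  shows "\<not> variation_L2 n l K mu"
proof -
  define e where "e = real n * (deriv (fp0 n l K) mu / (3 * fp0 n l K mu))\<^sup>2 * (l / 3)"
  have "e > 0" using assms n_ge_2 l_pos fp0_pos[OF mu] by (simp add: e_def)
  have "eventually (\<lambda>rho. e \<le> var_norm_sq_r mu (kr_of_rho n l K mu rho)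
      * vol_density_r mu (kr_of_rho n l K mu rho)) at_top"
    using eventually_L2_integrand_r_ge[OF assms] filterlim_kr_of_rho_at_top[OF mu]
    unfolding e_def by (rule eventually_compose_filterlim)
  then have "eventually (\<lambda>rho. var_norm_sq n l K mu rho * vol_density n l K mu rho \<ge> e) at_top"
    using eventually_gt_at_top[of 0]
    by eventually_elim (simp add: var_norm_sq_eq[OF mu] vol_density_eq[OF mu])
  then show ?thesis
    unfolding variation_L2_def using L2_integrand_nonneg[OF mu] \<open>e > 0\<close>
    by (intro not_integrable_on_Ioi_if_eventually_ge) auto
qed

lemma sqrt_kf_le:
  assumes "mu \<ge> 0" "0 < s" "s \<le> r"
  shows "sqrt (kf n l K mu r) \<le> r * sqrt (1 / l\<^sup>2 + 1 / s\<^sup>2)"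
proof -
  have "real_of_int K \<le> 1" "2 * mu / r ^ (n - 1) \<ge> 0" using K_cases assms by auto
  then have "kf n l K mu r \<le> r\<^sup>2 / l\<^sup>2 + 1" by (simp add: kf_def)
  also have "1 \<le> r\<^sup>2 / s\<^sup>2" using assms(2,3) by (simp add: power_mono)
  then have "r\<^sup>2 / l\<^sup>2 + 1 \<le> r\<^sup>2 * (1 / l\<^sup>2 + 1 / s\<^sup>2)" by (simp add: distrib_left)
  finally have "sqrt (kf n l K mu r) \<le> sqrt (r\<^sup>2 * (1 / l\<^sup>2 + 1 / s\<^sup>2))" by simp
  also have "\<dots> = r * sqrt (1 / l\<^sup>2 + 1 / s\<^sup>2)" using assms by (simp add: real_sqrt_mult)
  finally show ?thesis .
qed

lemma kf'_ge: "mu \<ge> 0 \<Longrightarrow> r > 0 \<Longrightarrow> kf' mu r \<ge> 2 * r / l\<^sup>2"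
  using n_ge_2 by (simp add: kf'_def)

lemma r_dmu_bounds:
  assumes "deriv (fp0 n l K) mu = 0" "mu \<ge> 0" "r > 0"
  shows "0 \<le> r_dmu mu r" "r_dmu mu r \<le> l\<^sup>2 / r ^ n"
proof -
  have "2 * r / l\<^sup>2 > 0" using assms l_pos by simp
  then have D: "kf' mu r > 0" "kf' mu r \<ge> 2 * r / l\<^sup>2" using kf'_ge[OF assms(2,3)] by linarith+
  have P: "r_dmu mu r = 2 / (r ^ (n - 1) * kf' mu r)" using assms(1) by (simp add: r_dmu_def)
  then show "0 \<le> r_dmu mu r" using D assms(3) by simp
  have "r_dmu mu r \<le> 2 / (r ^ (n - 1) * (2 * r / l\<^sup>2))"
    unfolding P using D assms(3) l_pos by (intro divide_left_mono mult_left_mono) auto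
  also have "r ^ (n - 1) * r = r ^ n" using n_ge_2 by (simp add: power_eq_if)
  then have "2 / (r ^ (n - 1) * (2 * r / l\<^sup>2)) = l\<^sup>2 / r ^ n"
    using assms(3) l_pos by (simp add: field_simps)
  finally show "r_dmu mu r \<le> l\<^sup>2 / r ^ n" .
qed

lemma abs_kf'_dmu_le:
  assumes "deriv (fp0 n l K) mu = 0" "mu \<ge> 0" "0 < s" "s \<le> r"
  shows "\<bar>kf'_dmu mu r\<bar> \<le> (2 * real n + 2 * real n * (real n - 1) * mu * l\<^sup>2 / s ^ (n + 1)) / r ^ n"
proof -
  define P where "P = r_dmu mu r"
  have "r > 0" using assms by linarith
  have P: "0 \<le> P" "P \<le> l\<^sup>2 / r ^ n" using r_dmu_bounds[OF assms(1,2) \<open>r > 0\<close>] by (simp_all add: P_def)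
  have "real n - 1 \<ge> 0" using n_ge_2 by simp
  have "2 * P / l\<^sup>2 \<le> 2 / r ^ n" using P(2) l_pos by (simp add: field_simps)
  moreover have "2 * real n * (real n - 1) * mu * P / r ^ (n + 1)
      \<le> 2 * real n * (real n - 1) * mu * (l\<^sup>2 / r ^ n) / s ^ (n + 1)"
    using P assms \<open>real n - 1 \<ge> 0\<close> by (intro frac_le mult_left_mono power_mono) auto
  moreover have "0 \<le> 2 * real n * (real n - 1) * mu * P / r ^ (n + 1)"
    using P assms \<open>real n - 1 \<ge> 0\<close> \<open>r > 0\<close> by simp
  moreover have "0 \<le> 2 * P / l\<^sup>2" "0 \<le> 2 * (real n - 1) / r ^ n"
    using P \<open>real n - 1 \<ge> 0\<close> \<open>r > 0\<close> by simp_all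
  ultimately have "\<bar>kf'_dmu mu r\<bar>
      \<le> 2 / r ^ n + 2 * (real n - 1) / r ^ n + 2 * real n * (real n - 1) * mu * (l\<^sup>2 / r ^ n) / s ^ (n + 1)"
    unfolding kf'_dmu_def P_def [symmetric] by linarith
  also have "\<dots> = (2 * real n + 2 * real n * (real n - 1) * mu * l\<^sup>2 / s ^ (n + 1)) / r ^ n"
    using \<open>r > 0\<close> assms(3) by (simp add: field_simps)
  finally show ?thesis .
qed

lemma var_norm_sq_r_le:
  assumes "deriv (fp0 n l K) mu = 0" "mu \<ge> 0" "0 < s" "s \<le> r"
  defines "C \<equiv> 2 * real n + 2 * real n * (real n - 1) * mu * l\<^sup>2 / s ^ (n + 1)"
  shows "var_norm_sq_r mu r \<le> (C\<^sup>2 + 4 * real n) * l ^ 4 / r ^ (2 * n + 2)"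
proof -
  have "r > 0" using assms by linarith
  have D: "kf' mu r \<ge> 2 * r / l\<^sup>2" "0 < 2 * r / l\<^sup>2" using kf'_ge[OF assms(2) \<open>r > 0\<close>] \<open>r > 0\<close> l_pos
    by simp_all
  have "C \<ge> 0" using n_ge_2 assms(2,3) by (simp add: C_def)
  have "\<bar>kf'_dmu mu r\<bar> \<le> C / r ^ n"
    unfolding C_def by (rule abs_kf'_dmu_le[OF assms(1-4)])
  have "\<bar>2 * kf'_dmu mu r / kf' mu r\<bar> = 2 * \<bar>kf'_dmu mu r\<bar> / kf' mu r"
    using D by (simp add: abs_mult)
  also have "\<dots> \<le> 2 * (C / r ^ n) / (2 * r / l\<^sup>2)"
    using \<open>\<bar>kf'_dmu mu r\<bar> \<le> C / r ^ n\<close> D \<open>C \<ge> 0\<close> by (intro frac_le) auto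
  also have "\<dots> = C * l\<^sup>2 / r ^ (n + 1)" using \<open>r > 0\<close> l_pos by (simp add: field_simps)
  finally have A: "(2 * kf'_dmu mu r / kf' mu r)\<^sup>2 \<le> (C * l\<^sup>2 / r ^ (n + 1))\<^sup>2"
    by (metis abs_ge_zero order_trans power2_abs power_mono)
  note P = r_dmu_bounds[OF assms(1,2) \<open>r > 0\<close>]
  have "2 * r_dmu mu r / r \<le> 2 * (l\<^sup>2 / r ^ n) / r"
    using P(2) \<open>r > 0\<close> by (intro divide_right_mono mult_left_mono) auto
  also have "\<dots> = 2 * l\<^sup>2 / r ^ (n + 1)" by simp
  finally have B: "(2 * r_dmu mu r / r)\<^sup>2 \<le> (2 * l\<^sup>2 / r ^ (n + 1))\<^sup>2"
    using P(1) \<open>r > 0\<close> by (intro power_mono) auto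
  have "var_norm_sq_r mu r \<le> (C * l\<^sup>2 / r ^ (n + 1))\<^sup>2 + real n * (2 * l\<^sup>2 / r ^ (n + 1))\<^sup>2"
    unfolding var_norm_sq_r_def using A B assms(1) by (intro add_mono mult_left_mono) auto
  also have "\<dots> = (C\<^sup>2 + 4 * real n) * l ^ 4 / r ^ (2 * n + 2)"
    using \<open>r > 0\<close> by (simp add: field_simps power2_eq_square power_mult_distrib power_add eval_nat_numeral mult_2)
  finally show ?thesis .
qed

lemma vol_density_r_le:
  assumes "mu \<ge> 0" "0 < s" "s \<le> r"
  shows "vol_density_r mu r \<le> sqrt (1 / l\<^sup>2 + 1 / s\<^sup>2) * l\<^sup>2 * r ^ n"
proof -
  have "r > 0" using assms by linarith
  have "vol_density_r mu r \<le> 2 * (r * sqrt (1 / l\<^sup>2 + 1 / s\<^sup>2)) * r ^ n / (2 * r / l\<^sup>2)"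
    unfolding vol_density_r_def using sqrt_kf_le[OF assms] kf'_ge[OF assms(1) \<open>r > 0\<close>] \<open>r > 0\<close> l_pos
    by (intro frac_le mult_right_mono mult_left_mono) auto
  also have "\<dots> = sqrt (1 / l\<^sup>2 + 1 / s\<^sup>2) * l\<^sup>2 * r ^ n" using \<open>r > 0\<close> l_pos by (simp add: field_simps)
  finally show ?thesis .
qed

lemma L2_integrand_r_le:
  assumes mu: "mu > mu_extremal" and "deriv (fp0 n l K) mu = 0" "mu \<ge> 0"
  shows "\<exists>C. \<forall>r \<ge> kr0 n l K mu. var_norm_sq_r mu r * vol_density_r mu r \<le> C / r ^ 4"
proof -
  define s where "s = kr0 n l K mu"
  define C where "C = 2 * real n + 2 * real n * (real n - 1) * mu * l\<^sup>2 / s ^ (n + 1)"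
  define W where "W = sqrt (1 / l\<^sup>2 + 1 / s\<^sup>2)"
  have "s > 0" using kr0_pos[OF mu] by (simp add: s_def)
  have "var_norm_sq_r mu r * vol_density_r mu r \<le> (C\<^sup>2 + 4 * real n) * l ^ 6 * W / s ^ (n - 2) / r ^ 4"
    if "s \<le> r" for r
  proof -
    have "r > 0" using \<open>s > 0\<close> that by linarith
    have "0 \<le> vol_density_r mu r"
      using kf_nonneg[OF mu, of r] kf'_pos[OF mu, of r] that \<open>r > 0\<close> by (simp add: vol_density_r_def s_def)
    then have "var_norm_sq_r mu r * vol_density_r mu r
        \<le> (C\<^sup>2 + 4 * real n) * l ^ 4 / r ^ (2 * n + 2) * (W * l\<^sup>2 * r ^ n)"
      using var_norm_sq_r_le[OF assms(2,3) \<open>s > 0\<close> that, folded C_def]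
        vol_density_r_le[OF assms(3) \<open>s > 0\<close> that, folded W_def] \<open>r > 0\<close>
      by (intro mult_mono) auto
    also have "\<dots> = (C\<^sup>2 + 4 * real n) * l ^ 6 * W / r ^ (n + 2)"
      using \<open>r > 0\<close> by (simp add: field_simps power_add eval_nat_numeral mult_2)
    also have "\<dots> \<le> (C\<^sup>2 + 4 * real n) * l ^ 6 * W / (s ^ (n - 2) * r ^ 4)"
    proof -
      have "s ^ (n - 2) * r ^ 4 \<le> r ^ (n - 2) * r ^ 4"
        using \<open>s > 0\<close> that by (intro mult_right_mono power_mono) auto
      also have "\<dots> = r ^ (n + 2)" using n_ge_2 by (simp add: power_add [symmetric])
      finally show ?thesis
        using \<open>s > 0\<close> \<open>r > 0\<close> l_pos by (intro divide_left_mono) (auto simp: W_def)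
    qed
    finally show ?thesis by simp
  qed
  then show ?thesis
    by (intro exI[of _ "(C\<^sup>2 + 4 * real n) * l ^ 6 * W / s ^ (n - 2)"]) (simp add: s_def)
qed

lemma rho_le_kr_of_rho:
  assumes mu: "mu > mu_extremal" and "mu \<ge> 0" "rho \<ge> 0"
  shows "rho * fp0 n l K mu \<le> 2 * sqrt (1 / l\<^sup>2 + 1 / (kr0 n l K mu)\<^sup>2) * kr_of_rho n l K mu rho"
proof -
  let ?R = "kr_of_rho n l K mu rho"
  have "rho * fp0 n l K mu = 2 * sqrt (kf n l K mu ?R)"
    using krho_kr_of_rho[OF mu \<open>rho \<ge> 0\<close>] fp0_pos[OF mu] by (simp add: krho_def field_simps)
  also have "\<dots> \<le> 2 * (?R * sqrt (1 / l\<^sup>2 + 1 / (kr0 n l K mu)\<^sup>2))"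
    using sqrt_kf_le[OF \<open>mu \<ge> 0\<close> kr0_pos[OF mu] kr_of_rho_ge_kr0[OF mu \<open>rho \<ge> 0\<close>]] by simp
  finally show ?thesis by (simp add: mult_ac)
qed

lemma abs_L2_integrand_le:
  assumes mu: "mu > mu_extremal" and "deriv (fp0 n l K) mu = 0" "mu \<ge> 0"
  shows "\<exists>C \<ge> 0. \<forall>rho > 0.
    \<bar>var_norm_sq n l K mu rho * vol_density n l K mu rho\<bar> \<le> C / kr_of_rho n l K mu rho ^ 4"
proof -
  obtain C where C: "\<And>r. r \<ge> kr0 n l K mu \<Longrightarrow> var_norm_sq_r mu r * vol_density_r mu r \<le> C / r ^ 4"
    using L2_integrand_r_le[OF assms] by blast
  have "\<bar>var_norm_sq n l K mu rho * vol_density n l K mu rho\<bar> \<le> \<bar>C\<bar> / kr_of_rho n l K mu rho ^ 4"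
    if "rho > 0" for rho
  proof -
    have "\<bar>var_norm_sq n l K mu rho * vol_density n l K mu rho\<bar> \<le> C / kr_of_rho n l K mu rho ^ 4"
      using L2_integrand_nonneg[OF mu less_imp_le[OF that]] C[OF kr_of_rho_ge_kr0[OF mu less_imp_le[OF that]]]
      by (simp add: var_norm_sq_eq[OF mu that] vol_density_eq[OF mu that])
    also have "\<dots> \<le> \<bar>C\<bar> / kr_of_rho n l K mu rho ^ 4" by (simp add: divide_right_mono)
    finally show ?thesis .
  qed
  then show ?thesis by (intro exI[of _ "\<bar>C\<bar>"]) auto
qed

lemma variation_L2_if_deriv_fp0_eq_0:
  assumes mu: "mu > mu_extremal" and "deriv (fp0 n l K) mu = 0"
  shows "variation_L2 n l K mu"
proof -
  have "mu \<ge> 0" using mu deriv_fp0_eq_0_iff[OF mu] assms(2) by (simp add: mu_extremal_eq)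
  define F where "F rho = var_norm_sq n l K mu rho * vol_density n l K mu rho" for rho
  obtain C where "C \<ge> 0" and F_le: "\<And>rho. rho > 0 \<Longrightarrow> \<bar>F rho\<bar> \<le> C / kr_of_rho n l K mu rho ^ 4"
    using abs_L2_integrand_le[OF mu assms(2) \<open>mu \<ge> 0\<close>] unfolding F_def by blast
  define s where "s = kr0 n l K mu"
  define a where "a = fp0 n l K mu / (2 * sqrt (1 / l\<^sup>2 + 1 / s\<^sup>2))"
  have "s > 0" using kr0_pos[OF mu] by (simp add: s_def)
  then have "sqrt (1 / l\<^sup>2 + 1 / s\<^sup>2) > 0" using l_pos by (simp add: add_pos_pos)
  then have "a > 0" using fp0_pos[OF mu] by (simp add: a_def)
  show ?thesis
    unfolding variation_L2_def F_def [symmetric]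
  proof (rule integrable_on_Ioi_0_if_bounded_and_power_decay[where p = 4])
    show "continuous_on {0<..} F" unfolding F_def by (rule continuous_on_L2_integrand[OF mu])
    fix rho :: real
    assume "0 < rho"
    have "C / kr_of_rho n l K mu rho ^ 4 \<le> C / s ^ 4"
      using kr_of_rho_ge_kr0[OF mu] kr_of_rho_pos[OF mu less_imp_le[OF \<open>0 < rho\<close>]] \<open>0 < rho\<close>
        \<open>s > 0\<close> \<open>C \<ge> 0\<close>
      by (intro divide_left_mono power_mono) (auto simp: s_def)
    then show "\<bar>F rho\<bar> \<le> C / s ^ 4" using F_le[OF \<open>0 < rho\<close>] by linarith
  next
    fix rho :: real
    assume "1 \<le> rho"
    have "rho * fp0 n l K mu \<le> 2 * sqrt (1 / l\<^sup>2 + 1 / s\<^sup>2) * kr_of_rho n l K mu rho"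
      using rho_le_kr_of_rho[OF mu \<open>mu \<ge> 0\<close>, of rho] \<open>1 \<le> rho\<close> by (simp add: s_def)
    then have "a * rho \<le> kr_of_rho n l K mu rho"
      using \<open>sqrt (1 / l\<^sup>2 + 1 / s\<^sup>2) > 0\<close> by (simp add: a_def pos_divide_le_eq mult_ac)
    moreover have "a * rho > 0" using \<open>a > 0\<close> \<open>1 \<le> rho\<close> by simp
    ultimately have "C / kr_of_rho n l K mu rho ^ 4 \<le> C / (a * rho) ^ 4"
      using \<open>a > 0\<close> \<open>1 \<le> rho\<close> kr_of_rho_pos[OF mu, of rho] \<open>C \<ge> 0\<close>
      by (intro divide_left_mono power_mono mult_pos_pos zero_less_power) auto
    then show "\<bar>F rho\<bar> \<le> C / a ^ 4 / rho ^ 4"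
      using F_le[of rho] \<open>1 \<le> rho\<close> by (simp add: power_mult_distrib divide_divide_eq_left mult.commute)
  qed auto
qed

end

theorem mainTheorem3:
  fixes n :: nat and l :: real and K :: int and mu :: real
  assumes "n \<ge> 2" and "l > 0" and "K \<in> {-1, 0, 1}" and "admissible n l K mu"
  shows "(variation_L2 n l K mu \<longleftrightarrow> deriv (fp0 n l K) mu = 0)
    \<and> (deriv (fp0 n l K) mu = 0 \<longleftrightarrow> K = 1 \<and> mu = mu_crit n l)
    \<and> (K = 1 \<longrightarrow> (mu = mu_crit n l \<longleftrightarrow> kr0 n l K mu = l * sqrt ((real n - 1) / (real n + 1))))
    \<and> (K \<in> {0, -1} \<longrightarrow> \<not> variation_L2 n l K mu)"
proof -
  interpret kottler n l K using assms(1-3) by unfold_locales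
  have mu: "mu > mu_extremal" using assms(4) admissible_iff by simp
  have "variation_L2 n l K mu \<longleftrightarrow> deriv (fp0 n l K) mu = 0"
    using variation_L2_if_deriv_fp0_eq_0[OF mu] not_variation_L2_if_deriv_fp0_neq_0[OF mu] by blast
  then show ?thesis
    using deriv_fp0_eq_0_iff[OF mu] kr0_eq_r_crit_iff[OF _ mu] unfolding r_crit_def by auto
qed

end
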